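(* Let $f:X\to Y$ be a homomorphism of complex tori, where $X$ has dimension $g$ and period matrix $(\tau\ \ I_g)$ and $Y$ has dimension $h$ and period matrix $(\sigma\ \ I_h)$ (with $\det\operatorname{Im}\tau\ne0$, $\det\operatorname{Im}\sigma\neq0$). Write $F_X=\mathbb{Q}(\{\tau_{ij}\})$, $F_Y=\mathbb{Q}(\{\sigma_{ij}\})$, $\mathfrak{d}_X=[F_X:\mathbb{Q}]$, $\mathfrak{d}_Y=[F_Y:\mathbb{Q}]$. Then: (1) if $f$ has finite kernel, then $F_X\subseteq F_Y$, in particular $\mathfrak{d}_X\le\mathfrak{d}_Y$; (2) if $f$ is surjective, then $F_Y\subseteq F_X$, in particular $\mathfrak{d}_Y\le\mathfrak{d}_X$; (3) if $f$ is an isogeny, then $F_X=F_Y$ and $\mathfrak{d}_X=\mathfrak{d}_Y$; (4) $F_X=F_{X^\vee}$, where $X^\vee$ is the dual torus. In particular $F_X$ and $\mathfrak{d}_X$ depend only on $X$ (indeed only on its isogeny class), not on the chosen period matrix of the form $(\tau\ \ I_g)$.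
   Context: A complex torus of dimension $g$ with period matrix $\Pi=(\tau\ \ I_g)$ is $X=\mathbb{C}^g/\Lambda$, where $\Lambda$ is the lattice generated by the $2g$ columns of $\Pi$; every complex torus admits such a period matrix with $\det(\operatorname{Im}\tau)\neq0$. For such a period matrix set $F_X=\mathbb{Q}(\{\tau_{ij}\})\subseteq\mathbb{C}$ and $\mathfrak{d}_X=[F_X:\mathbb{Q}]\in\mathbb{N}\cup\{\infty\}$. *)

theory Defs
  imports "HOL-Analysis.Analysis" "HOL-Library.Extended_Nat"
begin

text \<open>Lattice generated by the columns of the period matrix (tau I_g) in C^g.\<close>
definition period_lattice :: "complex^'g^'g \<Rightarrow> (complex^'g) set" where
  "period_lattice \<tau> =
     {\<tau> *v (\<chi> i. of_int (m $ i)) + (\<chi> i. of_int (n $ i)) | m n :: int^'g. True}"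

definition Im_mat :: "complex^'g^'g \<Rightarrow> real^'g^'g" where
  "Im_mat \<tau> = (\<chi> i j. Im (\<tau> $ i $ j))"

definition subfield_C :: "complex set \<Rightarrow> bool" where
  "subfield_C K \<longleftrightarrow> 0 \<in> K \<and> 1 \<in> K \<and>
     (\<forall>x\<in>K. \<forall>y\<in>K. x + y \<in> K \<and> x * y \<in> K) \<and>
     (\<forall>x\<in>K. - x \<in> K \<and> inverse x \<in> K)"

definition gen_field :: "complex set \<Rightarrow> complex set" where
  "gen_field S = \<Inter> {K. subfield_C K \<and> S \<subseteq> K}"

definition F_field :: "complex^'g^'g \<Rightarrow> complex set" where
  "F_field \<tau> = gen_field {\<tau> $ i $ j | i j. True}"

definition Q_indep :: "complex set \<Rightarrow> bool" where
  "Q_indep B \<longleftrightarrow> (\<forall>c :: complex \<Rightarrow> rat.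
      (\<Sum>b\<in>B. of_rat (c b) * b) = 0 \<longrightarrow> (\<forall>b\<in>B. c b = 0))"

text \<open>[K : Q] as an element of N \<union> {\<infinity>}: the supremum of sizes of finite Q-independent subsets.\<close>
definition Q_degree :: "complex set \<Rightarrow> enat" where
  "Q_degree K = Sup {enat (card B) | B. finite B \<and> B \<subseteq> K \<and> Q_indep B}"

text \<open>Analytic representation A of a homomorphism C^g/\<Lambda>_X \<rightarrow> C^h/\<Lambda>_Y.\<close>
definition is_torus_hom :: "complex^'g^'g \<Rightarrow> complex^'h^'h \<Rightarrow> complex^'g^'h \<Rightarrow> bool" where
  "is_torus_hom \<tau> \<sigma> A \<longleftrightarrow> (\<forall>z\<in>period_lattice \<tau>. A *v z \<in> period_lattice \<sigma>)"

definition hom_kernel :: "complex^'g^'g \<Rightarrow> complex^'h^'h \<Rightarrow> complex^'g^'h \<Rightarrow> (complex^'g) set set" where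
  "hom_kernel \<tau> \<sigma> A = (\<lambda>z. (\<lambda>l. z + l) ` period_lattice \<tau>) ` {z. A *v z \<in> period_lattice \<sigma>}"

definition hom_surjective :: "complex^'h^'h \<Rightarrow> complex^'g^'h \<Rightarrow> bool" where
  "hom_surjective \<sigma> A \<longleftrightarrow> (\<forall>w. \<exists>z. A *v z - w \<in> period_lattice \<sigma>)"

definition is_isogeny :: "complex^'g^'g \<Rightarrow> complex^'h^'h \<Rightarrow> complex^'g^'h \<Rightarrow> bool" where
  "is_isogeny \<tau> \<sigma> A \<longleftrightarrow> is_torus_hom \<tau> \<sigma> A \<and> hom_surjective \<sigma> A \<and> finite (hom_kernel \<tau> \<sigma> A)"

text \<open>Dual torus X^\<or> = \<Omega>bar/\<Lambda>^\<or>, identifying the antilinear functional l_w(v) = \<Sum> w_i conj(v_i)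
  with w \<in> C^g; \<Lambda>^\<or> = {l. Im l(\<Lambda>) \<subseteq> Z}.\<close>
definition dual_lattice :: "complex^'g^'g \<Rightarrow> (complex^'g) set" where
  "dual_lattice \<tau> = {w. \<forall>v\<in>period_lattice \<tau>. Im (\<Sum>i\<in>UNIV. w $ i * cnj (v $ i)) \<in> \<int>}"

end

theory Submission
  imports Defs
begin

text \<open>A homomorphism is a complex matrix \<open>A\<close> with \<open>A \<Lambda>\<^sub>X \<subseteq> \<Lambda>\<^sub>Y\<close>. Applied to the lattice
  generators this says \<open>A = \<sigma> b + d\<close> and \<open>A \<tau> = \<sigma> a + c\<close> for integral matrices \<open>a, b, c, d\<close>;
  in particular \<open>A\<close> and \<open>A \<tau>\<close> have entries in \<open>F\<^sub>Y\<close>. A finite kernel makes \<open>A\<close> injective, and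
  Cramer's rule on an invertible block of rows of \<open>A\<close> recovers \<open>\<tau>\<close> over \<open>F\<^sub>Y\<close>.
  If \<open>f\<close> is surjective then \<open>X = a - b \<tau>\<close> satisfies \<open>\<sigma> X = d \<tau> - c\<close>, and \<open>X\<close> is surjective
  because \<open>(conj \<sigma> - \<sigma>) X = conj A (conj \<tau> - \<tau>)\<close>, where \<open>conj \<tau> - \<tau> = -2i Im \<tau>\<close> is
  invertible; Cramer's rule on the transposed relation recovers \<open>\<sigma>\<close> over \<open>F\<^sub>X\<close>.
  A change of period matrix is an invertible linear isomorphism of lattices, and \<open>(Im \<tau>)\<^sup>T\<close>
  maps the dual lattice onto the lattice of \<open>\<tau>\<^sup>T\<close>, so both reduce to the injective case.\<close>

section \<open>Subfields of the complex numbers\<close>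

lemma subfield_C_gen_field: "subfield_C (gen_field S)"
  unfolding gen_field_def subfield_C_def by blast

lemma gen_field_subset: "S \<subseteq> gen_field S"
  unfolding gen_field_def by blast

lemma gen_field_least: "subfield_C K \<Longrightarrow> S \<subseteq> K \<Longrightarrow> gen_field S \<subseteq> K"
  unfolding gen_field_def by blast

context
  fixes K :: "complex set"
  assumes K: "subfield_C K"
begin

lemma subfield_C_0: "0 \<in> K"
  and subfield_C_1: "1 \<in> K"
  and subfield_C_add: "x \<in> K \<Longrightarrow> y \<in> K \<Longrightarrow> x + y \<in> K"
  and subfield_C_mult: "x \<in> K \<Longrightarrow> y \<in> K \<Longrightarrow> x * y \<in> K"
  and subfield_C_uminus: "x \<in> K \<Longrightarrow> - x \<in> K"
  and subfield_C_inverse: "x \<in> K \<Longrightarrow> inverse x \<in> K"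
  using K unfolding subfield_C_def by auto

lemma subfield_C_diff: "x \<in> K \<Longrightarrow> y \<in> K \<Longrightarrow> x - y \<in> K"
  by (metis diff_conv_add_uminus subfield_C_add subfield_C_uminus)

lemma subfield_C_divide: "x \<in> K \<Longrightarrow> y \<in> K \<Longrightarrow> x / y \<in> K"
  by (metis divide_inverse subfield_C_inverse subfield_C_mult)

lemma subfield_C_sum: "(\<And>i. i \<in> A \<Longrightarrow> f i \<in> K) \<Longrightarrow> sum f A \<in> K"
  by (induction A rule: infinite_finite_induct) (auto intro: subfield_C_0 subfield_C_add)

lemma subfield_C_prod: "(\<And>i. i \<in> A \<Longrightarrow> f i \<in> K) \<Longrightarrow> prod f A \<in> K"
  by (induction A rule: infinite_finite_induct) (auto intro: subfield_C_1 subfield_C_mult)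

lemma subfield_C_of_int: "of_int n \<in> K"
proof -
  have "of_nat k \<in> K" for k
    by (induction k) (auto intro: subfield_C_0 subfield_C_1 subfield_C_add)
  then show ?thesis
    by (cases n rule: int_cases2) (auto intro: subfield_C_uminus)
qed

lemma subfield_C_matrix_mult:
  "(\<And>i j. M $ i $ j \<in> K) \<Longrightarrow> (\<And>i j. N $ i $ j \<in> K) \<Longrightarrow> (M ** N) $ i $ j \<in> K"
  unfolding matrix_matrix_mult_def by (auto intro!: subfield_C_sum subfield_C_mult)

lemma subfield_C_det: "(\<And>i j. M $ i $ j \<in> K) \<Longrightarrow> det M \<in> K"
  unfolding det_def by (intro subfield_C_sum subfield_C_mult subfield_C_of_int subfield_C_prod)

end

lemma Q_degree_mono: "K \<subseteq> L \<Longrightarrow> Q_degree K \<le> Q_degree L"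
  unfolding Q_degree_def by (rule Sup_subset_mono) blast

section \<open>Entries of solutions of linear systems\<close>

lemma inj_matrix_vector_mult_obtain_rows:
  fixes B :: "'a::field^'n^'m"
  assumes "inj ((*v) B)"
  obtains r :: "'n \<Rightarrow> 'm" where "invertible (\<chi> i. B $ r i)"
proof -
  obtain S where S: "S \<subseteq> rows B" "vec.independent S" "rows B \<subseteq> vec.span S"
    using vec.maximal_independent_subset by blast
  have "vec.span (rows B) = UNIV"
    using assms matrix_left_invertible_span_rows_gen matrix_left_invertible_injective by metis
  then have span_S: "vec.span S = UNIV"
    using S(1,3) by (metis vec.span_mono vec.span_span top.extremum_unique)
  have "finite (rows B)"
    unfolding rows_def by (simp add: full_SetCompr_eq)
  then have "finite S"
    using S(1) finite_subset by blast
  moreover have "card S = CARD('n)"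
    unfolding vec_dim_card[where 'a='a, symmetric]
    by (rule vec.basis_card_eq_dim) (simp_all add: span_S S(2))
  ultimately have "\<exists>f. bij_betw f (UNIV :: 'n set) S"
    using finite_same_card_bij[of "UNIV :: 'n set" S] by simp
  then obtain f where f: "bij_betw f (UNIV :: 'n set) S" ..
  have "\<exists>j. row j B = f i" for i
  proof -
    have "f i \<in> rows B"
      using S(1) bij_betwE[OF f] by blast
    then show ?thesis
      unfolding rows_def by auto
  qed
  then obtain r where r: "\<And>i. row (r i) B = f i"
    by metis
  have "rows (\<chi> i. B $ r i) = S"
    using r f unfolding rows_def row_def bij_betw_def by (auto simp: vec_lambda_eta)
  then have "vec.span (rows (\<chi> i. B $ r i)) = UNIV"
    using span_S by simp
  then show ?thesis
    using that by (simp add: invertible_left_inverse matrix_left_invertible_span_rows_gen)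
qed

text \<open>Cramer's rule applied to an invertible square block of rows of \<open>B\<close>.\<close>

lemma subfield_C_entries_cancel_injective:
  fixes B :: "complex^'n^'m" and Y :: "complex^'p^'n"
  assumes K: "subfield_C K" and inj: "inj ((*v) B)"
    and B: "\<And>i j. B $ i $ j \<in> K" and BY: "\<And>i j. (B ** Y) $ i $ j \<in> K"
  shows "Y $ k $ l \<in> K"
proof -
  obtain r :: "'n \<Rightarrow> 'm" where "invertible (\<chi> i. B $ r i)"
    using inj_matrix_vector_mult_obtain_rows[OF inj] by blast
  then have det: "det (\<chi> i. B $ r i) \<noteq> 0"
    by (simp add: invertible_det_nz)
  have "(\<chi> i. B $ r i) *v column l Y = (\<chi> i. (B ** Y) $ r i $ l)"
    by (simp add: vec_eq_iff column_def matrix_vector_mult_def matrix_matrix_mult_def)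
  then have "Y $ k $ l = det (\<chi> i j. if j = k then (B ** Y) $ r i $ l else B $ r i $ j)
                         / det (\<chi> i. B $ r i)"
    unfolding cramer[OF det] by (simp add: vec_eq_iff column_def cong: if_cong)
  also have "\<dots> \<in> K"
    by (intro subfield_C_divide[OF K] subfield_C_det[OF K]) (simp_all add: B BY)
  finally show ?thesis .
qed

section \<open>Period lattices and their fields\<close>

definition of_int_vec :: "int^'n \<Rightarrow> 'a::ring_1^'n" where
  "of_int_vec m = (\<chi> i. of_int (m $ i))"

lemma of_int_vec_nth [simp]: "of_int_vec m $ i = of_int (m $ i)"
  by (simp add: of_int_vec_def)

lemma matrix_vector_mult_axis: "M *v axis j 1 = column j (M :: 'a::semiring_1^'n^'m)"
  by (simp add: vec_eq_iff matrix_vector_mult_def column_def axis_def if_distrib cong: if_cong)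

lemma period_lattice_iff: "z \<in> period_lattice \<tau> \<longleftrightarrow> (\<exists>m n. z = \<tau> *v of_int_vec m + of_int_vec n)"
  by (simp add: period_lattice_def of_int_vec_def)

lemma zero_in_period_lattice: "0 \<in> period_lattice \<tau>"
proof -
  have "0 = \<tau> *v of_int_vec 0 + of_int_vec 0"
    by (simp add: vec_eq_iff matrix_vector_mult_def)
  then show ?thesis
    unfolding period_lattice_iff by blast
qed

lemma column_in_period_lattice: "column j \<tau> \<in> period_lattice \<tau>"
proof -
  have "column j \<tau> = \<tau> *v of_int_vec (axis j 1) + of_int_vec 0"
    by (simp add: vec_eq_iff matrix_vector_mult_def column_def axis_def if_distrib cong: if_cong)
  then show ?thesis
    unfolding period_lattice_iff by blast
qed

lemma axis_in_period_lattice: "axis j 1 \<in> period_lattice \<tau>"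
proof -
  have "axis j 1 = \<tau> *v of_int_vec 0 + of_int_vec (axis j 1)"
    by (simp add: vec_eq_iff matrix_vector_mult_def axis_def)
  then show ?thesis
    unfolding period_lattice_iff by blast
qed

lemma countable_period_lattice: "countable (period_lattice \<tau>)"
proof -
  have "period_lattice \<tau> = (\<lambda>(m, n). \<tau> *v of_int_vec m + of_int_vec n) ` UNIV"
    by (force simp: period_lattice_iff)
  then show ?thesis
    by simp
qed

lemma subfield_C_F_field: "subfield_C (F_field \<tau>)"
  unfolding F_field_def by (rule subfield_C_gen_field)

lemma F_field_entry: "\<tau> $ i $ j \<in> F_field \<tau>"
  unfolding F_field_def by (rule subsetD[OF gen_field_subset]) blast

lemma F_field_least: "subfield_C K \<Longrightarrow> (\<And>i j. \<tau> $ i $ j \<in> K) \<Longrightarrow> F_field \<tau> \<subseteq> K"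
  unfolding F_field_def by (rule gen_field_least) blast+

lemma F_field_transpose: "F_field (transpose \<tau>) = F_field \<tau>"
proof
  show "F_field (transpose \<tau>) \<subseteq> F_field \<tau>"
    by (rule F_field_least[OF subfield_C_F_field]) (simp add: transpose_def F_field_entry)
  show "F_field \<tau> \<subseteq> F_field (transpose \<tau>)"
    by (rule F_field_least[OF subfield_C_F_field])
      (metis F_field_entry transpose_def vec_lambda_beta)
qed

lemma period_lattice_entry_in_F_field:
  assumes "z \<in> period_lattice \<sigma>"
  shows "z $ i \<in> F_field \<sigma>"
proof -
  obtain m n where "z = \<sigma> *v of_int_vec m + of_int_vec n"
    using assms period_lattice_iff by blast
  then show ?thesis
    by (simp add: matrix_vector_mult_def subfield_C_F_field F_field_entry subfield_C_add
        subfield_C_sum subfield_C_mult subfield_C_of_int)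
qed

lemma F_field_subset_if_injective_hom:
  assumes inj: "inj ((*v) A)" and hom: "is_torus_hom \<tau> \<sigma> A"
  shows "F_field \<tau> \<subseteq> F_field \<sigma>"
proof (rule F_field_least[OF subfield_C_F_field])
  have A_image: "(A *v z) $ i \<in> F_field \<sigma>" if "z \<in> period_lattice \<tau>" for z i
    using hom that period_lattice_entry_in_F_field unfolding is_torus_hom_def by blast
  have "A $ i $ j \<in> F_field \<sigma>" for i j
    using A_image[OF axis_in_period_lattice] by (simp add: matrix_vector_mult_axis column_def)
  moreover have "(A ** \<tau>) $ i $ j \<in> F_field \<sigma>" for i j
    using A_image[OF column_in_period_lattice]
    by (simp add: column_def matrix_vector_mult_def matrix_matrix_mult_def)
  ultimately show "\<tau> $ k $ l \<in> F_field \<sigma>" for k l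
    using subfield_C_entries_cancel_injective[OF subfield_C_F_field inj] by blast
qed

lemma F_field_eq_if_lattice_image:
  fixes M :: "complex^'g^'g"
  assumes M: "invertible M" and image: "(*v) M ` period_lattice \<tau> = period_lattice \<tau>'"
  shows "F_field \<tau>' = F_field \<tau>"
proof
  obtain N where N: "N ** M = mat 1"
    using M invertible_left_inverse by blast
  then have "invertible N"
    by (metis M invertible_def matrix_left_right_inverse)
  moreover have "is_torus_hom \<tau>' \<tau> N"
    unfolding is_torus_hom_def
  proof
    fix z
    assume "z \<in> period_lattice \<tau>'"
    then obtain u where "u \<in> period_lattice \<tau>" "z = M *v u"
      using image by blast
    then show "N *v z \<in> period_lattice \<tau>"
      by (simp add: matrix_vector_mul_assoc N)
  qed
  ultimately show "F_field \<tau>' \<subseteq> F_field \<tau>"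
    by (intro F_field_subset_if_injective_hom inj_matrix_vector_mult)
  have "is_torus_hom \<tau> \<tau>' M"
    using image unfolding is_torus_hom_def by blast
  then show "F_field \<tau> \<subseteq> F_field \<tau>'"
    by (rule F_field_subset_if_injective_hom[OF inj_matrix_vector_mult[OF M]])
qed

section \<open>Finite kernels and surjectivity\<close>

text \<open>Otherwise the real line through a nonzero vector of \<open>ker A\<close> would lie in the union of
  finitely many cosets of the countable lattice.\<close>

lemma inj_if_finite_hom_kernel:
  assumes "finite (hom_kernel \<tau> \<sigma> A)"
  shows "inj ((*v) A)"
proof (rule ccontr)
  assume "\<not> inj ((*v) A)"
  then obtain z where z: "A *v z = 0" "z \<noteq> 0"
    using matrix_left_invertible_ker matrix_left_invertible_injective by metis
  define line where "line t = complex_of_real t *s z" for t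
  have "range line \<subseteq> \<Union> (hom_kernel \<tau> \<sigma> A)"
  proof
    fix x
    assume "x \<in> range line"
    then obtain t where x: "x = line t"
      by blast
    have "A *v line t = 0"
      by (simp add: line_def vector_scalar_commute z)
    then have "(+) (line t) ` period_lattice \<tau> \<in> hom_kernel \<tau> \<sigma> A"
      unfolding hom_kernel_def using zero_in_period_lattice[of \<sigma>] by (auto intro!: image_eqI)
    moreover have "x \<in> (+) (line t) ` period_lattice \<tau>"
      using zero_in_period_lattice x by force
    ultimately show "x \<in> \<Union> (hom_kernel \<tau> \<sigma> A)"
      by blast
  qed
  moreover have "countable (\<Union> (hom_kernel \<tau> \<sigma> A))"
  proof (rule countable_UN[of _ id, simplified])
    show "countable (hom_kernel \<tau> \<sigma> A)"
      using assms by (rule countable_finite)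
    show "countable X" if "X \<in> hom_kernel \<tau> \<sigma> A" for X
      using that countable_period_lattice by (auto simp: hom_kernel_def)
  qed
  ultimately have "countable (range line)"
    using countable_subset by blast
  moreover obtain i where "z $ i \<noteq> 0"
    using z(2) by (metis vec_eq_iff zero_index)
  then have "inj line"
    by (intro injI) (metis line_def vector_smult_component mult_cancel_right of_real_eq_iff)
  ultimately show False
    using countable_image_inj_on uncountable_UNIV_real by blast
qed

text \<open>Otherwise \<open>\<complex>\<^sup>h\<close> would be covered by countably many translates of the proper,
  hence negligible, subspace \<open>range A\<close>.\<close>

lemma surj_if_hom_surjective:
  fixes A :: "complex^'g^'h"
  assumes "hom_surjective \<sigma> A"
  shows "surj ((*v) A)"
proof (rule ccontr)
  assume not_surj: "\<not> surj ((*v) A)"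
  let ?R = "range ((*v) A)"
  have "subspace ?R"
    using linear_subspace_image[OF matrix_vector_mul_linear subspace_UNIV] by simp
  then have span_R: "span ?R = ?R"
    by (rule span_eq_iff[THEN iffD2])
  have "dim ?R \<noteq> DIM(complex^'h)"
    unfolding dim_eq_full span_R using not_surj by simp
  then have "negligible ?R"
    using dim_subset_UNIV[of ?R] by (intro negligible_lowdim) linarith
  then have "negligible (\<Union>l\<in>period_lattice \<sigma>. (+) (- l) ` ?R)"
    by (intro negligible_countable_Union countable_image countable_period_lattice)
      (blast intro: negligible_translation)
  moreover have "UNIV \<subseteq> (\<Union>l\<in>period_lattice \<sigma>. (+) (- l) ` ?R)"
  proof
    fix w :: "complex^'h"
    obtain z where "A *v z - w \<in> period_lattice \<sigma>"
      using assms unfolding hom_surjective_def by blast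
    moreover have "w = - (A *v z - w) + A *v z"
      by simp
    ultimately show "w \<in> (\<Union>l\<in>period_lattice \<sigma>. (+) (- l) ` ?R)"
      by blast
  qed
  ultimately have "negligible (UNIV :: (complex^'h) set)"
    using negligible_subset by blast
  then show False
    by simp
qed

section \<open>Surjective homomorphisms\<close>

definition of_int_mat :: "int^'n^'m \<Rightarrow> 'a::ring_1^'n^'m" where
  "of_int_mat M = (\<chi> i j. of_int (M $ i $ j))"

definition of_real_mat :: "real^'n^'m \<Rightarrow> 'a::real_algebra_1^'n^'m" where
  "of_real_mat M = (\<chi> i j. of_real (M $ i $ j))"

definition cnj_mat :: "complex^'n^'m \<Rightarrow> complex^'n^'m" where
  "cnj_mat M = (\<chi> i j. cnj (M $ i $ j))"

lemma matrix_add_rdistrib: "(A + B) ** C = A ** C + B ** (C :: 'a::semiring_1^'p^'n)"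
  by (simp add: vec_eq_iff matrix_matrix_mult_def sum.distrib distrib_right)

lemma matrix_diff_ldistrib: "A ** (B - C) = A ** B - A ** (C :: 'a::ring_1^'p^'n)"
  by (simp add: vec_eq_iff matrix_matrix_mult_def sum_subtractf right_diff_distrib)

lemma matrix_diff_rdistrib: "(A - B) ** C = A ** C - B ** (C :: 'a::ring_1^'p^'n)"
  by (simp add: vec_eq_iff matrix_matrix_mult_def sum_subtractf left_diff_distrib)

lemma of_int_mat_nth [simp]: "of_int_mat M $ i $ j = of_int (M $ i $ j)"
  by (simp add: of_int_mat_def)

lemma of_real_mat_nth [simp]: "of_real_mat M $ i $ j = of_real (M $ i $ j)"
  by (simp add: of_real_mat_def)

lemma cnj_mat_nth [simp]: "cnj_mat M $ i $ j = cnj (M $ i $ j)"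
  by (simp add: cnj_mat_def)

lemma cnj_mat_add: "cnj_mat (M + N) = cnj_mat M + cnj_mat N"
  by (simp add: vec_eq_iff)

lemma cnj_mat_mult: "cnj_mat (M ** N) = cnj_mat M ** cnj_mat N"
  by (simp add: vec_eq_iff matrix_matrix_mult_def cnj_sum)

lemma cnj_mat_of_int_mat [simp]: "cnj_mat (of_int_mat M) = of_int_mat M"
  by (simp add: vec_eq_iff)

lemma cnj_mat_mat [simp]: "cnj_mat (mat 1) = mat 1"
  by (simp add: vec_eq_iff mat_def)

lemma of_real_mat_mult: "of_real_mat (M ** N) = of_real_mat M ** of_real_mat N"
  by (simp add: vec_eq_iff matrix_matrix_mult_def)

lemma of_real_mat_mat [simp]: "of_real_mat (mat 1) = mat 1"
  by (simp add: vec_eq_iff mat_def)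

lemma invertible_of_real_mat:
  "invertible M \<Longrightarrow> invertible (of_real_mat M :: 'a::{real_algebra_1,field}^'n^'n)"
  unfolding invertible_def by (metis of_real_mat_mult of_real_mat_mat)

lemma invertible_cnj_mat_minus:
  fixes \<tau> :: "complex^'g^'g"
  assumes "det (Im_mat \<tau>) \<noteq> 0"
  shows "invertible (cnj_mat \<tau> - \<tau>)"
proof -
  have "inj ((*v) (of_real_mat (Im_mat \<tau>) :: complex^'g^'g))"
    using assms by (metis inj_matrix_vector_mult invertible_of_real_mat invertible_det_nz)
  moreover have "(cnj_mat \<tau> - \<tau>) *v x = (- 2 * \<i>) *s (of_real_mat (Im_mat \<tau>) *v x)" for x
  proof -
    have "cnj z - z = - 2 * \<i> * of_real (Im z)" for z
      by (simp add: complex_eq_iff)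
    then show ?thesis
      by (simp add: vec_eq_iff matrix_vector_mult_def sum_distrib_left Im_mat_def mult.assoc sum_negf)
  qed
  ultimately have "(cnj_mat \<tau> - \<tau>) *v x = 0 \<Longrightarrow> x = 0" for x
    by (metis injD matrix_vector_mult_0_right vector_mul_eq_0 mult_eq_0_iff zero_neq_neg_numeral
        complex_i_not_zero)
  then show ?thesis
    by (metis invertible_left_inverse matrix_left_invertible_ker)
qed

lemma matrix_right_invertible_of_mult_eq:
  fixes X :: "'a::field^'n^'m" and P :: "'a^'m^'m" and Q :: "'a^'n^'n"
  assumes "invertible P" "invertible Q" "C ** C' = mat 1" "P ** X = C ** Q"
  shows "\<exists>X'. X ** X' = mat 1"
proof -
  obtain P' where P': "P' ** P = mat 1"
    using assms(1) unfolding invertible_def by blast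
  obtain Q' where Q': "Q ** Q' = mat 1"
    using assms(2) unfolding invertible_def by blast
  have "X ** (Q' ** C' ** P) = P' ** (P ** X) ** (Q' ** C' ** P)"
    by (simp add: matrix_mul_assoc P')
  also have "\<dots> = P' ** C ** (Q ** Q') ** C' ** P"
    by (simp add: assms(4) matrix_mul_assoc)
  also have "\<dots> = mat 1"
    by (simp add: Q' P' assms(3) matrix_mul_assoc[symmetric])
  finally show ?thesis ..
qed

lemma period_lattice_columns_obtain:
  fixes P :: "complex^'k^'h"
  assumes "\<And>j. column j P \<in> period_lattice \<sigma>"
  obtains a c :: "int^'k^'h" where "P = \<sigma> ** of_int_mat a + of_int_mat c"
proof -
  have "\<forall>j. \<exists>m n. column j P = \<sigma> *v of_int_vec m + of_int_vec n"
    using assms period_lattice_iff by blast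
  then obtain m n where mn: "\<And>j. column j P = \<sigma> *v of_int_vec (m j) + of_int_vec (n j)"
    by metis
  have "P = \<sigma> ** of_int_mat (\<chi> i j. m j $ i) + of_int_mat (\<chi> i j. n j $ i)"
  proof -
    have "P $ i $ j = (\<sigma> *v of_int_vec (m j) + of_int_vec (n j)) $ i" for i j
      using mn[of j] by (simp add: column_def vec_eq_iff)
    then show ?thesis
      by (simp add: vec_eq_iff matrix_vector_mult_def matrix_matrix_mult_def)
  qed
  then show ?thesis
    using that by blast
qed

lemma F_field_subset_if_surjective_hom:
  fixes \<tau> :: "complex^'g^'g" and \<sigma> :: "complex^'h^'h" and A :: "complex^'g^'h"
  assumes d\<tau>: "det (Im_mat \<tau>) \<noteq> 0" and d\<sigma>: "det (Im_mat \<sigma>) \<noteq> 0"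
    and hom: "is_torus_hom \<tau> \<sigma> A" and surj: "surj ((*v) A)"
  shows "F_field \<sigma> \<subseteq> F_field \<tau>"
proof -
  obtain b d :: "int^'g^'h" where A: "A = \<sigma> ** of_int_mat b + of_int_mat d"
    using hom axis_in_period_lattice
    by (metis period_lattice_columns_obtain is_torus_hom_def matrix_vector_mult_axis)
  obtain a c :: "int^'g^'h" where A\<tau>: "A ** \<tau> = \<sigma> ** of_int_mat a + of_int_mat c"
    using hom column_in_period_lattice
    by (metis period_lattice_columns_obtain is_torus_hom_def matrix_vector_mult_axis
        matrix_vector_mul_assoc)
  define X where "X = of_int_mat a - of_int_mat b ** \<tau>"
  have \<sigma>X: "\<sigma> ** X = of_int_mat d ** \<tau> - of_int_mat c"
  proof -
    have "\<sigma> ** of_int_mat b ** \<tau> = A ** \<tau> - of_int_mat d ** \<tau>"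
      using A by (simp add: matrix_add_rdistrib)
    then show ?thesis
      using A\<tau> by (simp add: X_def matrix_diff_ldistrib matrix_mul_assoc algebra_simps)
  qed
  have "(cnj_mat \<sigma> - \<sigma>) ** X = cnj_mat A ** (cnj_mat \<tau> - \<tau>)"
  proof -
    have cnj_A: "cnj_mat A = cnj_mat \<sigma> ** of_int_mat b + of_int_mat d"
      by (metis A cnj_mat_add cnj_mat_mult cnj_mat_of_int_mat)
    have cnj_A\<tau>: "cnj_mat A ** cnj_mat \<tau> = cnj_mat \<sigma> ** of_int_mat a + of_int_mat c"
      by (metis A\<tau> cnj_mat_add cnj_mat_mult cnj_mat_of_int_mat)
    have "cnj_mat A ** (cnj_mat \<tau> - \<tau>) = cnj_mat A ** cnj_mat \<tau> - cnj_mat A ** \<tau>"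
      by (rule matrix_diff_ldistrib)
    also have "\<dots> = cnj_mat \<sigma> ** X - (of_int_mat d ** \<tau> - of_int_mat c)"
      unfolding cnj_A\<tau> unfolding cnj_A
      by (simp add: X_def matrix_add_rdistrib matrix_diff_ldistrib matrix_mul_assoc)
    also have "\<dots> = (cnj_mat \<sigma> - \<sigma>) ** X"
      by (simp add: \<sigma>X matrix_diff_rdistrib)
    finally show ?thesis ..
  qed
  moreover obtain B where "A ** B = mat 1"
    using surj matrix_right_invertible_surjective by blast
  then have "cnj_mat A ** cnj_mat B = mat 1"
    by (metis cnj_mat_mult cnj_mat_mat)
  ultimately obtain X' where "X ** X' = mat 1"
    using matrix_right_invertible_of_mult_eq invertible_cnj_mat_minus d\<sigma> d\<tau> by metis
  then have "transpose X' ** transpose X = mat 1"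
    by (metis matrix_transpose_mul transpose_mat)
  then have inj: "inj ((*v) (transpose X))"
    using matrix_left_invertible_injective by blast
  have X_entries: "transpose X $ i $ j \<in> F_field \<tau>" for i j
    by (auto simp: X_def transpose_def intro!: subfield_C_diff subfield_C_of_int
        subfield_C_matrix_mult F_field_entry subfield_C_F_field)
  have "(transpose X ** transpose \<sigma>) $ i $ j \<in> F_field \<tau>" for i j
    unfolding matrix_transpose_mul[symmetric] \<sigma>X
    by (auto simp: transpose_def intro!: subfield_C_diff subfield_C_of_int
        subfield_C_matrix_mult F_field_entry subfield_C_F_field)
  then have "transpose \<sigma> $ j $ i \<in> F_field \<tau>" for i j
    using subfield_C_entries_cancel_injective[OF subfield_C_F_field inj X_entries] by blast
  then show ?thesis
    by (intro F_field_least[OF subfield_C_F_field]) (simp add: transpose_def)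
qed

section \<open>The dual lattice\<close>

lemma Ints_vec_obtain:
  assumes "\<And>i. f i \<in> \<int>"
  obtains m :: "int^'n" where "\<And>i. f i = of_int (m $ i)"
proof -
  have "\<forall>i. \<exists>k. f i = of_int k"
    using assms by (metis Ints_cases)
  then obtain g where "\<And>i. f i = of_int (g i)"
    by metis
  then show ?thesis
    using that[of "\<chi> i. g i"] by simp
qed

lemma dual_pairing_period_lattice_point:
  "(\<Sum>i\<in>UNIV. w $ i * cnj ((\<tau> *v of_int_vec p + of_int_vec q) $ i))
     = (\<Sum>l\<in>UNIV. of_int (p $ l) * (\<Sum>i\<in>UNIV. w $ i * cnj (\<tau> $ i $ l)))
       + (\<Sum>i\<in>UNIV. of_int (q $ i) * w $ i)"
proof -
  have "(\<Sum>i\<in>UNIV. w $ i * cnj ((\<tau> *v of_int_vec p) $ i))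
      = (\<Sum>i\<in>UNIV. \<Sum>l\<in>UNIV. of_int (p $ l) * (w $ i * cnj (\<tau> $ i $ l)))"
    by (simp add: matrix_vector_mult_def cnj_sum sum_distrib_left mult_ac)
  also have "\<dots> = (\<Sum>l\<in>UNIV. of_int (p $ l) * (\<Sum>i\<in>UNIV. w $ i * cnj (\<tau> $ i $ l)))"
    by (subst sum.swap) (simp add: sum_distrib_left)
  finally show ?thesis
    by (simp add: distrib_left sum.distrib mult.commute)
qed

lemma Im_sum_of_int_mult: "Im (\<Sum>l\<in>A. of_int (f l) * X l) = (\<Sum>l\<in>A. of_int (f l) * Im (X l))"
  by (simp add: Im_sum)

lemma dual_lattice_iff:
  "w \<in> dual_lattice \<tau> \<longleftrightarrow>
     (\<forall>i. Im (w $ i) \<in> \<int>) \<and> (\<forall>l. Im (\<Sum>i\<in>UNIV. w $ i * cnj (\<tau> $ i $ l)) \<in> \<int>)"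
proof
  assume w: "w \<in> dual_lattice \<tau>"
  have "Im (\<Sum>i\<in>UNIV. w $ i * cnj (axis j 1 $ i)) \<in> \<int>" for j
    using w axis_in_period_lattice unfolding dual_lattice_def by blast
  moreover have "Im (\<Sum>i\<in>UNIV. w $ i * cnj (column l \<tau> $ i)) \<in> \<int>" for l
    using w column_in_period_lattice unfolding dual_lattice_def by blast
  ultimately show "(\<forall>i. Im (w $ i) \<in> \<int>) \<and> (\<forall>l. Im (\<Sum>i\<in>UNIV. w $ i * cnj (\<tau> $ i $ l)) \<in> \<int>)"
    by (simp add: axis_def column_def if_distrib cong: if_cong)
next
  assume ints: "(\<forall>i. Im (w $ i) \<in> \<int>) \<and> (\<forall>l. Im (\<Sum>i\<in>UNIV. w $ i * cnj (\<tau> $ i $ l)) \<in> \<int>)"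
  show "w \<in> dual_lattice \<tau>"
    unfolding dual_lattice_def
  proof (intro CollectI ballI)
    fix v
    assume "v \<in> period_lattice \<tau>"
    then obtain p q where v: "v = \<tau> *v of_int_vec p + of_int_vec q"
      using period_lattice_iff by blast
    show "Im (\<Sum>i\<in>UNIV. w $ i * cnj (v $ i)) \<in> \<int>"
      unfolding v dual_pairing_period_lattice_point plus_complex.sel Im_sum_of_int_mult
      using ints by (intro Ints_add Ints_sum Ints_mult Ints_of_int) auto
  qed
qed

lemma Im_mat_transpose_mult_eq_lattice_point_iff:
  fixes \<tau> :: "complex^'g^'g"
  assumes "det (Im_mat \<tau>) \<noteq> 0"
  shows "of_real_mat (transpose (Im_mat \<tau>)) *v w = transpose \<tau> *v of_int_vec m + of_int_vec n \<longleftrightarrow>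
           (\<forall>i. Im (w $ i) = of_int (m $ i)) \<and>
           (\<forall>l. Im (\<Sum>i\<in>UNIV. w $ i * cnj (\<tau> $ i $ l)) = - of_int (n $ l))"
  (is "?lhs \<longleftrightarrow> ?Im_w \<and> ?pairing")
proof -
  let ?Re_eq = "\<lambda>l. (\<Sum>i\<in>UNIV. Im (\<tau> $ i $ l) * Re (w $ i))
                      = (\<Sum>i\<in>UNIV. Re (\<tau> $ i $ l) * of_int (m $ i)) + of_int (n $ l)"
  let ?Im_eq = "\<lambda>l. (\<Sum>i\<in>UNIV. Im (\<tau> $ i $ l) * Im (w $ i))
                      = (\<Sum>i\<in>UNIV. Im (\<tau> $ i $ l) * of_int (m $ i))"
  have lhs_iff: "?lhs \<longleftrightarrow> (\<forall>l. ?Re_eq l) \<and> (\<forall>l. ?Im_eq l)"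
    by (simp add: vec_eq_iff complex_eq_iff matrix_vector_mult_def transpose_def Im_mat_def
        Re_sum Im_sum all_conj_distrib)
  have Im_iff: "(\<forall>l. ?Im_eq l) \<longleftrightarrow> ?Im_w"
  proof
    assume "\<forall>l. ?Im_eq l"
    then have "transpose (Im_mat \<tau>) *v (\<chi> i. Im (w $ i) - of_int (m $ i)) = 0"
      by (simp add: vec_eq_iff matrix_vector_mult_def transpose_def Im_mat_def right_diff_distrib
          sum_subtractf)
    moreover have "inj ((*v) (transpose (Im_mat \<tau>)))"
      using assms by (simp add: inj_matrix_vector_mult invertible_det_nz det_transpose)
    ultimately have "(\<chi> i. Im (w $ i) - of_int (m $ i)) = 0"
      by (metis injD matrix_vector_mult_0_right)
    then show ?Im_w
      by (simp add: vec_eq_iff)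
  qed simp
  have "?Im_w \<Longrightarrow> ?Re_eq l \<longleftrightarrow> Im (\<Sum>i\<in>UNIV. w $ i * cnj (\<tau> $ i $ l)) = - of_int (n $ l)" for l
    by (auto simp: Im_sum sum_subtractf mult.commute)
  then have "?Im_w \<Longrightarrow> (\<forall>l. ?Re_eq l) \<longleftrightarrow> ?pairing"
    by blast
  with lhs_iff Im_iff show ?thesis
    by blast
qed

lemma invertible_of_real_mat_transpose_Im_mat:
  fixes \<tau> :: "complex^'g^'g"
  assumes "det (Im_mat \<tau>) \<noteq> 0"
  shows "invertible (of_real_mat (transpose (Im_mat \<tau>)) :: complex^'g^'g)"
  using assms by (metis invertible_of_real_mat invertible_det_nz det_transpose)

lemma image_dual_lattice:
  fixes \<tau> :: "complex^'g^'g"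
  assumes "det (Im_mat \<tau>) \<noteq> 0"
  shows "(*v) (of_real_mat (transpose (Im_mat \<tau>))) ` dual_lattice \<tau> = period_lattice (transpose \<tau>)"
    (is "(*v) ?B ` _ = _")
proof
  show "(*v) ?B ` dual_lattice \<tau> \<subseteq> period_lattice (transpose \<tau>)"
  proof
    fix u
    assume "u \<in> (*v) ?B ` dual_lattice \<tau>"
    then obtain w where w: "w \<in> dual_lattice \<tau>" "u = ?B *v w"
      by blast
    have ints: "\<forall>i. Im (w $ i) \<in> \<int>" "\<forall>l. Im (\<Sum>i\<in>UNIV. w $ i * cnj (\<tau> $ i $ l)) \<in> \<int>"
      using w(1) dual_lattice_iff by blast+
    obtain m :: "int^'g" where "\<And>i. Im (w $ i) = of_int (m $ i)"
      using Ints_vec_obtain[of "\<lambda>i. Im (w $ i)"] ints(1) by blast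
    moreover obtain k :: "int^'g" where "\<And>l. Im (\<Sum>i\<in>UNIV. w $ i * cnj (\<tau> $ i $ l)) = of_int (k $ l)"
      using Ints_vec_obtain[of "\<lambda>l. Im (\<Sum>i\<in>UNIV. w $ i * cnj (\<tau> $ i $ l))"] ints(2) by blast
    ultimately have "?B *v w = transpose \<tau> *v of_int_vec m + of_int_vec (- k)"
      unfolding Im_mat_transpose_mult_eq_lattice_point_iff[OF assms] by simp
    then show "u \<in> period_lattice (transpose \<tau>)"
      unfolding period_lattice_iff w(2) by blast
  qed
  show "period_lattice (transpose \<tau>) \<subseteq> (*v) ?B ` dual_lattice \<tau>"
  proof
    fix u
    assume "u \<in> period_lattice (transpose \<tau>)"
    then obtain m n where u: "u = transpose \<tau> *v of_int_vec m + of_int_vec n"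
      using period_lattice_iff by blast
    obtain C where "?B ** C = mat 1"
      using invertible_of_real_mat_transpose_Im_mat[OF assms] invertible_def by blast
    then have Bw: "?B *v (C *v u) = u"
      by (simp add: matrix_vector_mul_assoc)
    then have "(\<forall>i. Im ((C *v u) $ i) = of_int (m $ i)) \<and>
        (\<forall>l. Im (\<Sum>i\<in>UNIV. (C *v u) $ i * cnj (\<tau> $ i $ l)) = - of_int (n $ l))"
      using Im_mat_transpose_mult_eq_lattice_point_iff[OF assms] u by blast
    then have "C *v u \<in> dual_lattice \<tau>"
      unfolding dual_lattice_iff by (metis Ints_minus Ints_of_int)
    with Bw show "u \<in> (*v) ?B ` dual_lattice \<tau>"
      by (metis image_eqI)
  qed
qed

lemma F_field_eq_if_dual_lattice_image:
  fixes \<tau> \<tau>' M :: "complex^'g^'g"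
  assumes d\<tau>: "det (Im_mat \<tau>) \<noteq> 0" and M: "invertible M"
    and image: "(*v) M ` dual_lattice \<tau> = period_lattice \<tau>'"
  shows "F_field \<tau>' = F_field \<tau>"
proof -
  let ?B = "of_real_mat (transpose (Im_mat \<tau>)) :: complex^'g^'g"
  obtain C where C: "C ** ?B = mat 1" "?B ** C = mat 1"
    using invertible_of_real_mat_transpose_Im_mat[OF d\<tau>] invertible_def by blast
  then have "invertible (M ** C)"
    using M invertible_def invertible_mult by blast
  moreover have "(*v) (M ** C) ` period_lattice (transpose \<tau>) = period_lattice \<tau>'"
    unfolding image_dual_lattice[OF d\<tau>, symmetric] image_image matrix_vector_mul_assoc
    using C(1) image by (simp add: matrix_mul_assoc[symmetric])
  ultimately have "F_field \<tau>' = F_field (transpose \<tau>)"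
    by (rule F_field_eq_if_lattice_image)
  then show ?thesis
    by (simp add: F_field_transpose)
qed

theorem proposition2p2:
  fixes \<tau> :: "complex^'g^'g" and \<sigma> :: "complex^'h^'h" and A :: "complex^'g^'h"
  assumes "det (Im_mat \<tau>) \<noteq> 0" and "det (Im_mat \<sigma>) \<noteq> 0"
    and "is_torus_hom \<tau> \<sigma> A"
  shows "(finite (hom_kernel \<tau> \<sigma> A) \<longrightarrow>
            F_field \<tau> \<subseteq> F_field \<sigma> \<and> Q_degree (F_field \<tau>) \<le> Q_degree (F_field \<sigma>))
       \<and> (hom_surjective \<sigma> A \<longrightarrow>
            F_field \<sigma> \<subseteq> F_field \<tau> \<and> Q_degree (F_field \<sigma>) \<le> Q_degree (F_field \<tau>))
       \<and> (is_isogeny \<tau> \<sigma> A \<longrightarrow>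
            F_field \<tau> = F_field \<sigma> \<and> Q_degree (F_field \<tau>) = Q_degree (F_field \<sigma>))
       \<and> (\<forall>(\<tau>' :: complex^'g^'g) (M :: complex^'g^'g).
            det (Im_mat \<tau>') \<noteq> 0 \<and> invertible M \<and>
            (\<lambda>w. M *v w) ` dual_lattice \<tau> = period_lattice \<tau>' \<longrightarrow>
            F_field \<tau>' = F_field \<tau>)
       \<and> (\<forall>(\<tau>' :: complex^'g^'g) (M :: complex^'g^'g).
            det (Im_mat \<tau>') \<noteq> 0 \<and> invertible M \<and>
            (\<lambda>w. M *v w) ` period_lattice \<tau> = period_lattice \<tau>' \<longrightarrow>
            F_field \<tau>' = F_field \<tau> \<and> Q_degree (F_field \<tau>') = Q_degree (F_field \<tau>))"
proof -
  have kernel: "F_field \<tau> \<subseteq> F_field \<sigma>" if "finite (hom_kernel \<tau> \<sigma> A)"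
    using F_field_subset_if_injective_hom[OF inj_if_finite_hom_kernel[OF that] assms(3)] .
  have surjective: "F_field \<sigma> \<subseteq> F_field \<tau>" if "hom_surjective \<sigma> A"
    using F_field_subset_if_surjective_hom[OF assms surj_if_hom_surjective[OF that]] .
  have isogeny: "F_field \<tau> = F_field \<sigma>" if "is_isogeny \<tau> \<sigma> A"
    using that kernel surjective unfolding is_isogeny_def by blast
  show ?thesis
    using kernel surjective isogeny Q_degree_mono
      F_field_eq_if_dual_lattice_image[OF assms(1)] F_field_eq_if_lattice_image
    by (metis (no_types, lifting))
qed

end
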